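(* For $0<\rho<1$ and integers $k\ge2$ define $$\begin{aligned}a_k(\rho) ={}& \frac{4\sqrt{1+\rho^2}}{9} \binom{\frac{3}{2}}{k+1} (-1)^{k+1} \Big(\frac{2\rho^2}{3(1+\rho^2)}\Big)^{k}+\frac{\sqrt{1+\rho^2}}{3} \binom{\frac{1}{2}}{2k}\Big(\frac{2\rho}{1+\rho^2}\Big)^{2k} -\frac{28}{15\sqrt{1+\rho^2}}\binom{\frac{1}{2}}{2k+2}\Big(\frac{2\rho}{1+\rho^2}\Big)^{2k}\\&+\frac{10\rho^2+1}{15\sqrt{1+\rho^2}}\binom{\frac{1}{2}}{2k+1}\Big(\frac{2\rho}{1+\rho^2}\Big)^{2k} -\frac{\rho\sqrt{1+\rho^2}}{6}\binom{\frac{1}{2}}{2k-1}\Big(\frac{2\rho}{1+\rho^2}\Big)^{2k-1}-\frac{8}{5\sqrt{1+\rho^2}}\binom{\frac{1}{2}}{2k+3}\Big(\frac{2\rho}{1+\rho^2}\Big)^{2k}.\end{aligned}$$ Then $a_k(\rho)<0$ for all integers $k\ge2$ and all $0<\rho<1$.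
   Context: For real $a$ and integer $m\ge0$, $\binom{a}{m}=\frac{a(a-1)\cdots(a-m+1)}{m!}$ is the generalized binomial coefficient. *)

theory Defs
  imports Complex_Main
begin

definition a_coef :: "nat \<Rightarrow> real \<Rightarrow> real" where
  "a_coef k \<rho> =
     4 * sqrt (1 + \<rho>^2) / 9 * ((3/2::real) gchoose (k+1)) * (-1)^(k+1)
        * (2*\<rho>^2 / (3*(1+\<rho>^2)))^k
   + sqrt (1 + \<rho>^2) / 3 * ((1/2::real) gchoose (2*k)) * (2*\<rho>/(1+\<rho>^2))^(2*k)
   - 28 / (15 * sqrt (1 + \<rho>^2)) * ((1/2::real) gchoose (2*k+2)) * (2*\<rho>/(1+\<rho>^2))^(2*k)
   + (10*\<rho>^2 + 1) / (15 * sqrt (1 + \<rho>^2)) * ((1/2::real) gchoose (2*k+1)) * (2*\<rho>/(1+\<rho>^2))^(2*k)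
   - \<rho> * sqrt (1 + \<rho>^2) / 6 * ((1/2::real) gchoose (2*k-1)) * (2*\<rho>/(1+\<rho>^2))^(2*k-1)
   - 8 / (5 * sqrt (1 + \<rho>^2)) * ((1/2::real) gchoose (2*k+3)) * (2*\<rho>/(1+\<rho>^2))^(2*k)"

end

theory Submission
  imports Defs
begin

(* Put t = 1 + rho^2 and K = k. All six terms of a_k carry the positive factor
   (2 rho/t)^(2k) / sqrt t, and the five binomials of 1/2 are rational multiples of
   B = (1/2 gchoose 2k-1) > 0. What remains is
     (4t/9) e_k (t/6)^k - B R(K,t) / (24 K (K+1)(2K+1)(2K+3)),
   where e_k = (-1)^(k+1) (3/2 gchoose k+1) and R is an explicit polynomial.
   Comparing ratios of consecutive terms gives 0 < e_k <= B, and t < 2 gives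
   (t/6)^k <= 3^-k <= K^-3. Since R ~ 8 K^4 (t-2)^2 degenerates as rho -> 1, this
   decay of the first term is really needed: the inequality
   4t/(9K^3) < R/(24K(K+1)(2K+1)(2K+3)) is, after clearing denominators, a quadratic
   in t whose discriminant is negative for K >= 2. *)

lemma gbinomial_Suc_ratio:
  fixes a :: "'a::field_char_0"
  shows "a gchoose Suc k = (a gchoose k) * (a - of_nat k) / of_nat (Suc k)"
  using gbinomial_mult_1[of a k] by (simp add: field_simps del: of_nat_Suc)

lemma signed_gbinomial_three_halves_Suc:
  "((3/2::real) gchoose (k + 2)) * (-1)^(k + 2)
     = ((3/2) gchoose (k + 1)) * (-1)^(k + 1) * ((real k - 1/2) / (real k + 2))"
  by (simp add: gbinomial_Suc_ratio field_simps)

lemma gbinomial_half_even: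
  assumes "1 \<le> k"
  shows "(1/2::real) gchoose (2*k) = ((1/2) gchoose (2*k - 1)) * (3/2 - 2*real k) / (2*real k)"
proof -
  have "(1/2::real) gchoose Suc (2*k - 1)
      = ((1/2) gchoose (2*k - 1)) * (1/2 - real (2*k - 1)) / real (Suc (2*k - 1))"
    by (rule gbinomial_Suc_ratio)
  then show ?thesis
    using assms by (simp add: of_nat_diff)
qed

lemma gbinomial_half_odd_Suc:
  assumes "1 \<le> k"
  shows "(1/2::real) gchoose (2*k + 1)
     = ((1/2) gchoose (2*k - 1)) * ((4*real k - 3) * (4*real k - 1) / (4*real k * (4*real k + 2)))"
proof -
  have "(1/2::real) gchoose (2*k + 1) = ((1/2) gchoose (2*k)) * (1/2 - 2*real k) / (2*real k + 1)"
    using gbinomial_Suc_ratio[of "1/2::real" "2*k"] by simp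
  moreover have "real k \<noteq> 0" "2*real k + 1 \<noteq> 0" "4*real k + 2 \<noteq> 0"
    using assms by auto
  ultimately show ?thesis
    unfolding gbinomial_half_even[OF assms] by (simp add: divide_simps) (simp add: algebra_simps)
qed

lemma signed_gbinomial_three_halves_le_gbinomial_half:
  assumes "2 \<le> k"
  shows "0 < ((3/2::real) gchoose (k + 1)) * (-1)^(k + 1)
    \<and> ((3/2::real) gchoose (k + 1)) * (-1)^(k + 1) \<le> (1/2) gchoose (2*k - 1)"
  using assms
proof (induction k rule: dec_induct)
  case base
  show ?case by (simp add: gbinomial_Suc_ratio numeral_3_eq_3)
next
  case (step n)
  define e where "e = ((3/2::real) gchoose (n + 1)) * (-1)^(n + 1)"
  define B where "B = (1/2::real) gchoose (2*n - 1)"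
  define p where "p = (real n - 1/2) / (real n + 2)"
  define q where "q = (4*real n - 3) * (4*real n - 1) / (4*real n * (4*real n + 2))"
  have n: "2 \<le> real n" using step(1) by simp
  have "0 < p" using n by (simp add: p_def)
  have "p \<le> q"
  proof -
    have "(4*real n - 3) * (4*real n - 1) * (real n + 2) - (real n - 1/2) * (4*real n * (4*real n + 2))
        = real n * (16*real n - 25) + 6"
      by (simp add: algebra_simps)
    also have "\<dots> \<ge> 0" using n by simp
    finally show ?thesis
      using n by (simp add: p_def q_def divide_simps) (simp add: algebra_simps)
  qed
  have "Suc n + 1 = n + 2" and "2 * Suc n - 1 = 2*n + 1" by simp_all
  moreover have "((3/2::real) gchoose (n + 2)) * (-1)^(n + 2) = e * p"
    unfolding e_def p_def by (rule signed_gbinomial_three_halves_Suc)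
  moreover have "(1/2::real) gchoose (2*n + 1) = B * q"
    unfolding B_def q_def using step(1) by (intro gbinomial_half_odd_Suc) simp
  moreover have "0 < e" "e \<le> B"
    using step(3) by (simp_all add: e_def B_def)
  ultimately show ?case
    using \<open>0 < p\<close> \<open>p \<le> q\<close> by (auto intro: mult_mono)
qed

lemma cube_le_three_power:
  assumes "2 \<le> k"
  shows "k^3 \<le> (3::nat)^k"
proof (cases "k = 2")
  case False
  with assms have "3 \<le> k" by simp
  then show ?thesis
  proof (induction k rule: dec_induct)
    case (step n)
    have "3 * n \<le> n * n"
      using mult_right_mono[OF step(1), of n] by simp
    then have "3 * n + 1 \<le> 3 * n^2"
      using step(1) unfolding power2_eq_square by linarith
    moreover have "3 * n^2 \<le> n^3"
      using mult_right_mono[OF step(1), of "n^2"] by (simp add: power2_eq_square power3_eq_cube)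
    moreover have "(Suc n)^3 = n^3 + 3 * n^2 + 3 * n + 1"
      by (simp add: power2_eq_square power3_eq_cube algebra_simps)
    ultimately have "(Suc n)^3 \<le> 3 * n^3" by linarith
    then show ?case using step(3) by simp
  qed simp
qed simp

lemma power_sixth_le_inverse_cube:
  fixes t :: real
  assumes "2 \<le> k" and "0 \<le> t" and "t \<le> 2"
  shows "(t/6)^k \<le> 1 / real k^3"
proof -
  have "(t/6)^k \<le> (1/3)^k"
    using assms by (intro power_mono) auto
  also have "\<dots> = 1 / 3^k"
    by (simp add: power_divide)
  also have "\<dots> \<le> 1 / real k^3"
    using cube_le_three_power[OF assms(1)] assms(1)
    by (intro divide_left_mono) (simp_all flip: of_nat_power of_nat_le_iff)
  finally show ?thesis .
qed

lemma quadratic_pos: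
  fixes a b c t :: real
  assumes "0 < a" and "b^2 < 4*a*c"
  shows "0 < a*t^2 + b*t + c"
proof -
  have "4*a*(a*t^2 + b*t + c) = (2*a*t + b)^2 + (4*a*c - b^2)"
    by (simp add: power2_eq_square algebra_simps)
  also have "\<dots> > 0"
    using assms(2) by (simp add: add_nonneg_pos)
  finally show ?thesis
    using assms(1) by (simp add: zero_less_mult_iff)
qed

definition half_binomial_numerator :: "real \<Rightarrow> real \<Rightarrow> real" where
  "half_binomial_numerator K t =
     8*K^4*(t - 2)^2 + 24*K^3*(t - 2)*(t + 1) + K^2*(22*t^2 + 68*t + 70)
     + K*(6*t^2 + 24*t - 51) + 9 - 36*t"

lemma half_binomial_part:
  fixes t :: real
  assumes "1 \<le> k"
  defines "K \<equiv> real k"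
  shows "t/3 * ((1/2) gchoose (2*k)) - 28/15 * ((1/2) gchoose (2*k + 2))
       + (10*t - 9)/15 * ((1/2) gchoose (2*k + 1)) - t^2/12 * ((1/2) gchoose (2*k - 1))
       - 8/5 * ((1/2) gchoose (2*k + 3))
     = - ((1/2) gchoose (2*k - 1)) * half_binomial_numerator K t / (24*K*(K+1)*(2*K+1)*(2*K+3))"
proof -
  define B where "B = (1/2::real) gchoose (2*k - 1)"
  have c0: "(1/2::real) gchoose (2*k) = B * (3/2 - 2*K) / (2*K)"
    unfolding B_def K_def using assms(1) by (rule gbinomial_half_even)
  have c1: "(1/2::real) gchoose (2*k + 1) = ((1/2) gchoose (2*k)) * (1/2 - 2*K) / (2*K + 1)"
    using gbinomial_Suc_ratio[of "1/2::real" "2*k"] by (simp add: K_def)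
  have c2: "(1/2::real) gchoose (2*k + 2) = ((1/2) gchoose (2*k + 1)) * (-1/2 - 2*K) / (2*K + 2)"
    using gbinomial_Suc_ratio[of "1/2::real" "2*k + 1"] by (simp add: K_def)
  have c3: "(1/2::real) gchoose (2*k + 3) = ((1/2) gchoose (2*k + 2)) * (-3/2 - 2*K) / (2*K + 3)"
    using gbinomial_Suc_ratio[of "1/2::real" "2*k + 2"] by (simp add: K_def eval_nat_numeral)
  have "K \<noteq> 0" "K + 1 \<noteq> 0" "2*K + 1 \<noteq> 0" "2*K + 2 \<noteq> 0" "2*K + 3 \<noteq> 0"
    using assms by (auto simp: K_def)
  then show ?thesis
    unfolding c3 c2 c1 c0 B_def[symmetric] half_binomial_numerator_def
    by (simp add: divide_simps) (simp add: algebra_simps power2_eq_square power3_eq_cube power4_eq_xxxx)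
qed

lemma half_binomial_numerator_dominates:
  fixes K t :: real
  assumes "2 \<le> K"
  shows "4*t/(9*K^3) < half_binomial_numerator K t / (24*K*(K+1)*(2*K+1)*(2*K+3))"
proof -
  define a where "a = 6*K^3*(K+1)*(2*K+1)*(2*K+3)"
  define b where "b = -96*K^6 - 72*K^5 + 204*K^4 - 56*K^3 - 492*K^2 - 352*K - 96"
  define c where "c = 96*K^6 - 144*K^5 + 210*K^4 - 153*K^3 + 27*K^2"
  define j where "j = K - 2"
  have "0 \<le> j" using assms by (simp add: j_def)
  have "4*a*c - b^2 = 8 * (705600 + 10615920*j + 34752160*j^2 + 57166968*j^3 + 57322108*j^4
      + 37643415*j^5 + 16579996*j^6 + 4863813*j^7 + 912744*j^8 + 99204*j^9 + 4752*j^10)"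
    unfolding a_def b_def c_def j_def by (simp add: algebra_simps power_def)
  also have "\<dots> > 0"
    using \<open>0 \<le> j\<close> by (intro mult_pos_pos add_pos_nonneg mult_nonneg_nonneg zero_le_power) auto
  finally have "0 < a*t^2 + b*t + c"
    using assms by (intro quadratic_pos) (auto simp: a_def)
  also have "a*t^2 + b*t + c = 3*K^2 * half_binomial_numerator K t - 32*t*(K+1)*(2*K+1)*(2*K+3)"
    unfolding a_def b_def c_def half_binomial_numerator_def by algebra
  finally have numerator_less: "32*t*(K+1)*(2*K+1)*(2*K+3) < 3*K^2 * half_binomial_numerator K t"
    by simp
  have "K \<noteq> 0" "K + 1 \<noteq> 0" "2*K + 1 \<noteq> 0" "2*K + 3 \<noteq> 0"
    using assms by auto
  then have "4*t/(9*K^3) = 32*t*(K+1)*(2*K+1)*(2*K+3) / (3*K^2 * (24*K*(K+1)*(2*K+1)*(2*K+3)))"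
    by (simp add: divide_simps) (simp add: algebra_simps power3_eq_cube power2_eq_square)
  also have "\<dots> < 3*K^2 * half_binomial_numerator K t / (3*K^2 * (24*K*(K+1)*(2*K+1)*(2*K+3)))"
    using numerator_less assms by (intro divide_strict_right_mono) auto
  finally show ?thesis
    using assms by (simp add: mult.assoc)
qed

lemma a_coef_eq:
  fixes \<rho> :: real
  assumes "1 \<le> k"
  defines "t \<equiv> 1 + \<rho>^2"
  shows "a_coef k \<rho> = (2*\<rho>/t)^(2*k) / sqrt t *
      (4*t/9 * (((3/2) gchoose (k + 1)) * (-1)^(k + 1)) * (t/6)^k
       + (t/3 * ((1/2) gchoose (2*k)) - 28/15 * ((1/2) gchoose (2*k + 2))
          + (10*t - 9)/15 * ((1/2) gchoose (2*k + 1)) - t^2/12 * ((1/2) gchoose (2*k - 1))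
          - 8/5 * ((1/2) gchoose (2*k + 3))))"
proof -
  define s where "s = sqrt t"
  define x where "x = 2*\<rho>/t"
  have "0 < t" by (simp add: t_def add_pos_nonneg)
  then have s: "s * s = t" "0 < s" by (simp_all add: s_def)
  have "2*\<rho>^2 / (3*t) = x^2 * (t/6)"
    using \<open>0 < t\<close> by (simp add: x_def field_simps power2_eq_square)
  then have pow_k: "(2*\<rho>^2 / (3*t))^k = x^(2*k) * (t/6)^k"
    by (simp only: power_mult power_mult_distrib[symmetric])
  have rho: "\<rho> = x * t/2"
    using \<open>0 < t\<close> by (simp add: x_def)
  obtain m where m: "2*k = Suc m" "2*k - 1 = m"
    using assms by (intro that[of "2*k - 1"]) auto
  have "10*\<rho>^2 + 1 = 10*t - 9" by (simp add: t_def)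
  \<comment> \<open>With t replaced by s * s the claim is an identity of rational functions.\<close>
  show ?thesis
    unfolding a_coef_def t_def[symmetric] s_def[symmetric] x_def[symmetric] pow_k \<open>10*\<rho>^2 + 1 = 10*t - 9\<close>
    unfolding rho m s(1)[symmetric]
    using s(2) by (simp add: field_simps power4_eq_xxxx)
qed

theorem lemma6:
  fixes k :: nat and \<rho> :: real
  assumes "k \<ge> 2" and "0 < \<rho>" and "\<rho> < 1"
  shows "a_coef k \<rho> < 0"
proof -
  define t where "t = 1 + \<rho>^2"
  define K where "K = real k"
  define e where "e = ((3/2::real) gchoose (k + 1)) * (-1)^(k + 1)"
  define B where "B = (1/2::real) gchoose (2*k - 1)"
  define r where "r = half_binomial_numerator K t / (24*K*(K+1)*(2*K+1)*(2*K+3))"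
  have "1 < t" "t < 2"
    using assms by (simp_all add: t_def power_less_one_iff)
  have "0 < e" "e \<le> B"
    using signed_gbinomial_three_halves_le_gbinomial_half[OF assms(1)] by (simp_all add: e_def B_def)
  have "4*t/9 * e * (t/6)^k \<le> 4*t/9 * B * (1/K^3)"
    using \<open>0 < e\<close> \<open>e \<le> B\<close> \<open>1 < t\<close> \<open>t < 2\<close> power_sixth_le_inverse_cube[OF assms(1), of t]
    by (intro mult_mono) (auto simp: K_def)
  also have "\<dots> = B * (4*t/(9*K^3))" by simp
  also have "\<dots> < B * r"
    using half_binomial_numerator_dominates[of K t] assms(1) \<open>0 < e\<close> \<open>e \<le> B\<close>
    by (intro mult_strict_left_mono) (auto simp: K_def r_def)
  finally have bracket_neg: "4*t/9 * e * (t/6)^k - B * r < 0" by simp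
  have a_coef_factor: "a_coef k \<rho> = (2*\<rho>/t)^(2*k) / sqrt t * (4*t/9 * e * (t/6)^k - B * r)"
    using a_coef_eq[of k \<rho>] half_binomial_part[of k t] assms(1)
    by (simp add: t_def e_def B_def r_def K_def)
  have "0 < (2*\<rho>/t)^(2*k) / sqrt t"
    using assms(2) \<open>1 < t\<close> by simp
  then show ?thesis
    unfolding a_coef_factor using bracket_neg by (rule mult_pos_neg)
qed

end
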